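(* Let $\mathbf A$ be a WHB-algebra. The map $\Theta$ sending $Y\in DC(X(\mathbf A))$ to $\Theta(Y)=\{(a,b)\in A\times A\colon \sigma_{\mathbf A}(a)\cap Y=\sigma_{\mathbf A}(b)\cap Y\}$ is a bijection from $DC(X(\mathbf A))$ onto the congruence lattice $\mathrm{Con}(\mathbf A)$, with inverse $\theta\mapsto\Theta^{-1}(\theta)=\{P\in X(\mathbf A)\colon \text{for all }(a,b)\in\theta,\ a\in P\Rightarrow b\in P\}$; these maps reverse inclusion, so they constitute a dual lattice isomorphism between $\mathrm{Con}(\mathbf A)$ and $DC(X(\mathbf A))$.
   Context: A WHB-algebra is an algebra $(A,\wedge,\vee,\to,\leftarrow,0,1)$ such that $(A,\wedge,\vee,0,1)$ is a bounded distributive lattice and for all $a,b,c\in A$: $a\to a=1$; $a\to(b\wedge c)=(a\to b)\wedge(a\to c)$; $(a\vee b)\to c=(a\to c)\wedge(b\to c)$; $(a\to b)\wedge(b\to c)\le a\to c$; $a\leftarrow a=0$; $(a\vee b)\leftarrow c=(a\leftarrow c)\vee(b\leftarrow c)$; $a\leftarrow(b\wedge c)=(a\leftarrow b)\vee(a\leftarrow c)$; $a\leftarrow c\le(a\leftarrow b)\vee(b\leftarrow c)$; $a\wedge((a\to b)\leftarrow 0)\le b$; $a\le b\vee(1\to(a\leftarrow b))$. $X(\mathbf A)$ is the set of prime filters of $\mathbf A$, $\sigma_{\mathbf A}(a)=\{P\in X(\mathbf A)\colon a\in P\}$, and $\tau_{\mathbf A}$ is the topology on $X(\mathbf A)$ with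 subbase $\{\sigma_{\mathbf A}(a)\colon a\in A\}\cup\{X(\mathbf A)\setminus\sigma_{\mathbf A}(a)\colon a\in A\}$. Relations on $X(\mathbf A)$: $(P,Q)\in R_{\mathbf A}$ iff for all $a,b$, $a\to b\in P$ and $a\in Q$ imply $b\in Q$; $(P,Q)\in S_{\mathbf A}$ iff for all $a,b$, $a\in Q$ and $b\notin Q$ imply $a\leftarrow b\in P$. $DC(X(\mathbf A))$ is the set of $\tau_{\mathbf A}$-closed sets $Y\subseteq X(\mathbf A)$ such that $P\in Y$ and $(P,Q)\in R_{\mathbf A}$ imply $Q\in Y$, and $P\in Y$ and $(P,Q)\in S_{\mathbf A}$ imply $Q\in Y$, ordered by inclusion. *)

theory Defs
  imports "HOL-Analysis.Analysis"
begin

text \<open>An algebra (A, meet, join, imp, coimp, zero, one) is given by a carrier set A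
  together with its operations; imp is the arrow a \<rightarrow> b and coimp is a \<leftarrow> b.\<close>

definition bdl_le :: "('a \<Rightarrow> 'a \<Rightarrow> 'a) \<Rightarrow> 'a \<Rightarrow> 'a \<Rightarrow> bool" where
  "bdl_le meet a b \<longleftrightarrow> meet a b = a"

definition bounded_distrib_lattice_on ::
  "'a set \<Rightarrow> ('a \<Rightarrow> 'a \<Rightarrow> 'a) \<Rightarrow> ('a \<Rightarrow> 'a \<Rightarrow> 'a) \<Rightarrow> 'a \<Rightarrow> 'a \<Rightarrow> bool" where
  "bounded_distrib_lattice_on A meet join zero one \<longleftrightarrow>
     zero \<in> A \<and> one \<in> A \<and>
     (\<forall>a\<in>A. \<forall>b\<in>A. meet a b \<in> A \<and> join a b \<in> A) \<and>
     (\<forall>a\<in>A. \<forall>b\<in>A. meet a b = meet b a \<and> join a b = join b a) \<and>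
     (\<forall>a\<in>A. \<forall>b\<in>A. \<forall>c\<in>A. meet (meet a b) c = meet a (meet b c) \<and>
                         join (join a b) c = join a (join b c)) \<and>
     (\<forall>a\<in>A. \<forall>b\<in>A. meet a (join a b) = a \<and> join a (meet a b) = a) \<and>
     (\<forall>a\<in>A. \<forall>b\<in>A. \<forall>c\<in>A. meet a (join b c) = join (meet a b) (meet a c)) \<and>
     (\<forall>a\<in>A. meet zero a = zero \<and> join one a = one)"

definition whb_algebra ::
  "'a set \<Rightarrow> ('a \<Rightarrow> 'a \<Rightarrow> 'a) \<Rightarrow> ('a \<Rightarrow> 'a \<Rightarrow> 'a) \<Rightarrow> ('a \<Rightarrow> 'a \<Rightarrow> 'a) \<Rightarrow>
   ('a \<Rightarrow> 'a \<Rightarrow> 'a) \<Rightarrow> 'a \<Rightarrow> 'a \<Rightarrow> bool" where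
  "whb_algebra A meet join imp coimp zero one \<longleftrightarrow>
     bounded_distrib_lattice_on A meet join zero one \<and>
     (\<forall>a\<in>A. \<forall>b\<in>A. imp a b \<in> A \<and> coimp a b \<in> A) \<and>
     (\<forall>a\<in>A. imp a a = one) \<and>
     (\<forall>a\<in>A. \<forall>b\<in>A. \<forall>c\<in>A. imp a (meet b c) = meet (imp a b) (imp a c)) \<and>
     (\<forall>a\<in>A. \<forall>b\<in>A. \<forall>c\<in>A. imp (join a b) c = meet (imp a c) (imp b c)) \<and>
     (\<forall>a\<in>A. \<forall>b\<in>A. \<forall>c\<in>A. bdl_le meet (meet (imp a b) (imp b c)) (imp a c)) \<and>
     (\<forall>a\<in>A. coimp a a = zero) \<and>
     (\<forall>a\<in>A. \<forall>b\<in>A. \<forall>c\<in>A. coimp (join a b) c = join (coimp a c) (coimp b c)) \<and>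
     (\<forall>a\<in>A. \<forall>b\<in>A. \<forall>c\<in>A. coimp a (meet b c) = join (coimp a b) (coimp a c)) \<and>
     (\<forall>a\<in>A. \<forall>b\<in>A. \<forall>c\<in>A. bdl_le meet (coimp a c) (join (coimp a b) (coimp b c))) \<and>
     (\<forall>a\<in>A. \<forall>b\<in>A. bdl_le meet (meet a (coimp (imp a b) zero)) b) \<and>
     (\<forall>a\<in>A. \<forall>b\<in>A. bdl_le meet a (join b (imp one (coimp a b))))"

definition prime_filters ::
  "'a set \<Rightarrow> ('a \<Rightarrow> 'a \<Rightarrow> 'a) \<Rightarrow> ('a \<Rightarrow> 'a \<Rightarrow> 'a) \<Rightarrow> 'a set set" where
  "prime_filters A meet join = {P. P \<subseteq> A \<and> P \<noteq> {} \<and> P \<noteq> A \<and>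
      (\<forall>a\<in>P. \<forall>b\<in>A. bdl_le meet a b \<longrightarrow> b \<in> P) \<and>
      (\<forall>a\<in>P. \<forall>b\<in>P. meet a b \<in> P) \<and>
      (\<forall>a\<in>A. \<forall>b\<in>A. join a b \<in> P \<longrightarrow> a \<in> P \<or> b \<in> P)}"

definition sigmaA ::
  "'a set \<Rightarrow> ('a \<Rightarrow> 'a \<Rightarrow> 'a) \<Rightarrow> ('a \<Rightarrow> 'a \<Rightarrow> 'a) \<Rightarrow> 'a \<Rightarrow> 'a set set" where
  "sigmaA A meet join a = {P \<in> prime_filters A meet join. a \<in> P}"

definition tauA ::
  "'a set \<Rightarrow> ('a \<Rightarrow> 'a \<Rightarrow> 'a) \<Rightarrow> ('a \<Rightarrow> 'a \<Rightarrow> 'a) \<Rightarrow> 'a set topology" where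
  "tauA A meet join = subtopology
     (topology_generated_by
        ((\<lambda>a. sigmaA A meet join a) ` A \<union>
         (\<lambda>a. prime_filters A meet join - sigmaA A meet join a) ` A))
     (prime_filters A meet join)"

definition relR ::
  "'a set \<Rightarrow> ('a \<Rightarrow> 'a \<Rightarrow> 'a) \<Rightarrow> ('a \<Rightarrow> 'a \<Rightarrow> 'a) \<Rightarrow> ('a \<Rightarrow> 'a \<Rightarrow> 'a) \<Rightarrow> ('a set \<times> 'a set) set" where
  "relR A meet join imp = {(P, Q). P \<in> prime_filters A meet join \<and> Q \<in> prime_filters A meet join \<and>
      (\<forall>a\<in>A. \<forall>b\<in>A. imp a b \<in> P \<and> a \<in> Q \<longrightarrow> b \<in> Q)}"

definition relS ::
  "'a set \<Rightarrow> ('a \<Rightarrow> 'a \<Rightarrow> 'a) \<Rightarrow> ('a \<Rightarrow> 'a \<Rightarrow> 'a) \<Rightarrow> ('a \<Rightarrow> 'a \<Rightarrow> 'a) \<Rightarrow> ('a set \<times> 'a set) set" where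
  "relS A meet join coimp = {(P, Q). P \<in> prime_filters A meet join \<and> Q \<in> prime_filters A meet join \<and>
      (\<forall>a\<in>A. \<forall>b\<in>A. a \<in> Q \<and> b \<notin> Q \<longrightarrow> coimp a b \<in> P)}"

definition DC ::
  "'a set \<Rightarrow> ('a \<Rightarrow> 'a \<Rightarrow> 'a) \<Rightarrow> ('a \<Rightarrow> 'a \<Rightarrow> 'a) \<Rightarrow> ('a \<Rightarrow> 'a \<Rightarrow> 'a) \<Rightarrow>
   ('a \<Rightarrow> 'a \<Rightarrow> 'a) \<Rightarrow> 'a set set set" where
  "DC A meet join imp coimp = {Y. closedin (tauA A meet join) Y \<and>
      (\<forall>P Q. P \<in> Y \<and> (P, Q) \<in> relR A meet join imp \<longrightarrow> Q \<in> Y) \<and>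
      (\<forall>P Q. P \<in> Y \<and> (P, Q) \<in> relS A meet join coimp \<longrightarrow> Q \<in> Y)}"

text \<open>Congruences: equivalence relations on A compatible with all operations
  (the constants are trivially compatible).\<close>
definition Con ::
  "'a set \<Rightarrow> ('a \<Rightarrow> 'a \<Rightarrow> 'a) \<Rightarrow> ('a \<Rightarrow> 'a \<Rightarrow> 'a) \<Rightarrow> ('a \<Rightarrow> 'a \<Rightarrow> 'a) \<Rightarrow>
   ('a \<Rightarrow> 'a \<Rightarrow> 'a) \<Rightarrow> ('a \<times> 'a) set set" where
  "Con A meet join imp coimp = {\<theta>. equiv A \<theta> \<and>
      (\<forall>a b c d. (a, b) \<in> \<theta> \<and> (c, d) \<in> \<theta> \<longrightarrow>
         (meet a c, meet b d) \<in> \<theta> \<and> (join a c, join b d) \<in> \<theta> \<and>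
         (imp a c, imp b d) \<in> \<theta> \<and> (coimp a c, coimp b d) \<in> \<theta>)}"

definition ThetaMap ::
  "'a set \<Rightarrow> ('a \<Rightarrow> 'a \<Rightarrow> 'a) \<Rightarrow> ('a \<Rightarrow> 'a \<Rightarrow> 'a) \<Rightarrow> 'a set set \<Rightarrow> ('a \<times> 'a) set" where
  "ThetaMap A meet join Y = {(a, b) \<in> A \<times> A. sigmaA A meet join a \<inter> Y = sigmaA A meet join b \<inter> Y}"

definition ThetaInv ::
  "'a set \<Rightarrow> ('a \<Rightarrow> 'a \<Rightarrow> 'a) \<Rightarrow> ('a \<Rightarrow> 'a \<Rightarrow> 'a) \<Rightarrow> ('a \<times> 'a) set \<Rightarrow> 'a set set" where
  "ThetaInv A meet join \<theta> = {P \<in> prime_filters A meet join. \<forall>(a, b) \<in> \<theta>. a \<in> P \<longrightarrow> b \<in> P}"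

end

theory Submission
  imports Defs
begin

text \<open>
  Everything rests on one prime filter theorem. Call a relation \<open>T\<close> on a bounded
  distributive lattice a lattice quasiorder if it contains \<open>\<le>\<close>, is transitive and satisfies
  \<open>T x y \<and> T x z \<Longrightarrow> T x (y \<and> z)\<close> and \<open>T x z \<and> T y z \<Longrightarrow> T (x \<or> y) z\<close>. If \<open>T a b\<close> fails,
  a maximal \<open>T\<close>-closed filter containing \<open>a\<close> and avoiding \<open>b\<close> (Zorn) is prime.

  For a prime filter \<open>P\<close>, taking \<open>T x y\<close> to be \<open>x \<rightarrow> y \<in> P\<close> resp. \<open>x \<leftarrow> y \<notin> P\<close> produces
  the \<open>R\<close>- and \<open>S\<close>-successors of \<open>P\<close> needed to show that \<open>\<Theta>(Y)\<close> respects \<open>\<rightarrow>\<close> and \<open>\<leftarrow>\<close>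
  when \<open>Y\<close> is closed under \<open>R\<close> and \<open>S\<close>, and that \<open>\<Theta>\<inverse>(\<theta>)\<close> is closed under \<open>R\<close> and \<open>S\<close>.
  Taking \<open>T x y\<close> to be \<open>(x \<and> y) \<theta> x\<close> shows that a lattice congruence \<open>\<theta>\<close> is recovered
  from the \<open>\<theta>\<close>-closed prime filters, i.e. \<open>\<Theta>(\<Theta>\<inverse>(\<theta>)) = \<theta>\<close>. Conversely, the sets
  \<open>\<sigma>(a) - \<sigma>(b)\<close> form a base of \<open>\<tau>\<close>, so a closed set \<open>Y\<close> is recovered from \<open>\<Theta>(Y)\<close>.
\<close>

locale bdl =
  fixes A :: "'a set" and meet join :: "'a \<Rightarrow> 'a \<Rightarrow> 'a" and zero one :: 'a
  assumes bounded_distrib_lattice: "bounded_distrib_lattice_on A meet join zero one"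
begin

abbreviation le :: "'a \<Rightarrow> 'a \<Rightarrow> bool" (infix "\<preceq>" 50)
  where "x \<preceq> y \<equiv> bdl_le meet x y"

lemma zero_closed [simp]: "zero \<in> A" and one_closed [simp]: "one \<in> A"
  and meet_closed [simp]: "x \<in> A \<Longrightarrow> y \<in> A \<Longrightarrow> meet x y \<in> A"
  and join_closed [simp]: "x \<in> A \<Longrightarrow> y \<in> A \<Longrightarrow> join x y \<in> A"
  using bounded_distrib_lattice unfolding bounded_distrib_lattice_on_def by auto

lemma meet_commute: "x \<in> A \<Longrightarrow> y \<in> A \<Longrightarrow> meet x y = meet y x"
  and join_commute: "x \<in> A \<Longrightarrow> y \<in> A \<Longrightarrow> join x y = join y x"
  and meet_assoc: "x \<in> A \<Longrightarrow> y \<in> A \<Longrightarrow> z \<in> A \<Longrightarrow> meet (meet x y) z = meet x (meet y z)"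
  and meet_join_absorb: "x \<in> A \<Longrightarrow> y \<in> A \<Longrightarrow> meet x (join x y) = x"
  and join_meet_absorb: "x \<in> A \<Longrightarrow> y \<in> A \<Longrightarrow> join x (meet x y) = x"
  and meet_join_distrib: "x \<in> A \<Longrightarrow> y \<in> A \<Longrightarrow> z \<in> A \<Longrightarrow>
        meet x (join y z) = join (meet x y) (meet x z)"
  and zero_meet: "x \<in> A \<Longrightarrow> meet zero x = zero"
  and one_join: "x \<in> A \<Longrightarrow> join one x = one"
  using bounded_distrib_lattice unfolding bounded_distrib_lattice_on_def by auto

lemma meet_idem: "x \<in> A \<Longrightarrow> meet x x = x"
  using meet_join_absorb[of x "meet x zero"] join_meet_absorb[of x zero] by simp

lemma join_meet_distrib_right: "x \<in> A \<Longrightarrow> y \<in> A \<Longrightarrow> z \<in> A \<Longrightarrow>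
    meet (join x y) z = join (meet x z) (meet y z)"
  by (simp add: meet_commute meet_join_distrib)

lemma le_refl: "x \<in> A \<Longrightarrow> x \<preceq> x"
  by (simp add: bdl_le_def meet_idem)

lemma meet_le1: "x \<in> A \<Longrightarrow> y \<in> A \<Longrightarrow> meet x y \<preceq> x"
  unfolding bdl_le_def
  using meet_assoc[of x y x] meet_commute[of y x] meet_assoc[of x x y] meet_idem[of x] by simp

lemma meet_le2: "x \<in> A \<Longrightarrow> y \<in> A \<Longrightarrow> meet x y \<preceq> y"
  unfolding bdl_le_def by (simp add: meet_assoc meet_idem)

lemma le_join1: "x \<in> A \<Longrightarrow> y \<in> A \<Longrightarrow> x \<preceq> join x y"
  unfolding bdl_le_def by (simp add: meet_join_absorb)

lemma le_join2: "x \<in> A \<Longrightarrow> y \<in> A \<Longrightarrow> y \<preceq> join x y"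
  unfolding bdl_le_def using join_commute[of x y] meet_join_absorb[of y x] by simp

lemma le_one: "x \<in> A \<Longrightarrow> x \<preceq> one"
  unfolding bdl_le_def using meet_join_absorb[of x one] join_commute[of x one] one_join[of x] by simp

lemma zero_le: "x \<in> A \<Longrightarrow> zero \<preceq> x"
  by (simp add: bdl_le_def zero_meet)

lemma join_zero: "x \<in> A \<Longrightarrow> join x zero = x"
  using join_meet_absorb[of x zero] zero_le[of x] meet_commute[of x zero]
  by (simp add: bdl_le_def)

lemma le_iff_join: "x \<in> A \<Longrightarrow> y \<in> A \<Longrightarrow> x \<preceq> y \<longleftrightarrow> join x y = y"
  unfolding bdl_le_def
  using join_commute[of "meet x y" y] meet_commute[of x y] join_meet_absorb[of y x] meet_join_absorb[of x y]
  by auto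

abbreviation X :: "'a set set" where "X \<equiv> prime_filters A meet join"

lemma
  assumes "P \<in> X"
  shows prime_filter_subset: "P \<subseteq> A"
    and prime_filter_nonempty: "P \<noteq> {}"
    and prime_filter_proper: "P \<noteq> A"
    and prime_filter_upward: "x \<in> P \<Longrightarrow> y \<in> A \<Longrightarrow> x \<preceq> y \<Longrightarrow> y \<in> P"
    and prime_filter_meet: "x \<in> P \<Longrightarrow> y \<in> P \<Longrightarrow> meet x y \<in> P"
    and prime_filter_prime: "x \<in> A \<Longrightarrow> y \<in> A \<Longrightarrow> join x y \<in> P \<Longrightarrow> x \<in> P \<or> y \<in> P"
  using assms unfolding prime_filters_def by blast+

lemma one_in_prime_filter:
  assumes "P \<in> X" shows "one \<in> P"
proof -
  obtain p where "p \<in> P"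
    using prime_filter_nonempty[OF assms] by blast
  moreover have "p \<in> A"
    using prime_filter_subset[OF assms] \<open>p \<in> P\<close> by blast
  ultimately show ?thesis
    using prime_filter_upward[OF assms _ one_closed le_one] by blast
qed

lemma zero_notin_prime_filter:
  assumes "P \<in> X" shows "zero \<notin> P"
proof
  assume "zero \<in> P"
  then have "A \<subseteq> P"
    using prime_filter_upward[OF assms _ _ zero_le] by blast
  with prime_filter_subset[OF assms] prime_filter_proper[OF assms] show False
    by blast
qed

lemma prime_filter_meet_iff:
  assumes "P \<in> X" "x \<in> A" "y \<in> A"
  shows "meet x y \<in> P \<longleftrightarrow> x \<in> P \<and> y \<in> P"
  using prime_filter_upward[OF assms(1) _ assms(2) meet_le1[OF assms(2,3)]]
    prime_filter_upward[OF assms(1) _ assms(3) meet_le2[OF assms(2,3)]]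
    prime_filter_meet[OF assms(1)] by blast

lemma prime_filter_join_iff:
  assumes "P \<in> X" "x \<in> A" "y \<in> A"
  shows "join x y \<in> P \<longleftrightarrow> x \<in> P \<or> y \<in> P"
  using prime_filter_upward[OF assms(1) _ join_closed[OF assms(2,3)] le_join1[OF assms(2,3)]]
    prime_filter_upward[OF assms(1) _ join_closed[OF assms(2,3)] le_join2[OF assms(2,3)]]
    prime_filter_prime[OF assms] by blast

end

locale lattice_quasiorder = bdl +
  fixes T :: "'a \<Rightarrow> 'a \<Rightarrow> bool"
  assumes le_imp_T: "x \<in> A \<Longrightarrow> y \<in> A \<Longrightarrow> x \<preceq> y \<Longrightarrow> T x y"
    and T_trans: "x \<in> A \<Longrightarrow> y \<in> A \<Longrightarrow> z \<in> A \<Longrightarrow> T x y \<Longrightarrow> T y z \<Longrightarrow> T x z"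
    and T_meetI: "x \<in> A \<Longrightarrow> y \<in> A \<Longrightarrow> z \<in> A \<Longrightarrow> T x y \<Longrightarrow> T x z \<Longrightarrow> T x (meet y z)"
    and T_joinI: "x \<in> A \<Longrightarrow> y \<in> A \<Longrightarrow> z \<in> A \<Longrightarrow> T x z \<Longrightarrow> T y z \<Longrightarrow> T (join x y) z"
begin

definition closed_filter :: "'a set \<Rightarrow> bool" where
  "closed_filter F \<longleftrightarrow> F \<subseteq> A \<and> (\<forall>x\<in>F. \<forall>y\<in>F. meet x y \<in> F) \<and> (\<forall>x\<in>F. \<forall>y\<in>A. T x y \<longrightarrow> y \<in> F)"

definition maximal_closed_filter :: "'a \<Rightarrow> 'a set \<Rightarrow> bool" where
  "maximal_closed_filter b M \<longleftrightarrow> closed_filter M \<and> b \<notin> M \<and>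
     (\<forall>F. closed_filter F \<and> M \<subseteq> F \<and> b \<notin> F \<longrightarrow> F = M)"

lemma closed_filterI:
  assumes "F \<subseteq> A" "\<And>x y. x \<in> F \<Longrightarrow> y \<in> F \<Longrightarrow> meet x y \<in> F"
    "\<And>x y. x \<in> F \<Longrightarrow> y \<in> A \<Longrightarrow> T x y \<Longrightarrow> y \<in> F"
  shows "closed_filter F"
  using assms unfolding closed_filter_def by blast

lemma
  assumes "closed_filter F"
  shows closed_filter_subset: "F \<subseteq> A"
    and closed_filter_meet: "x \<in> F \<Longrightarrow> y \<in> F \<Longrightarrow> meet x y \<in> F"
    and closed_filter_T: "x \<in> F \<Longrightarrow> y \<in> A \<Longrightarrow> T x y \<Longrightarrow> y \<in> F"
  using assms unfolding closed_filter_def by blast+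

lemma T_refl: "x \<in> A \<Longrightarrow> T x x"
  by (simp add: le_imp_T le_refl)

lemma T_meet_mono:
  assumes "h \<in> A" "f \<in> A" "x \<in> A" "h \<preceq> f"
  shows "T (meet h x) (meet f x)"
proof -
  have "T (meet h x) h"
    using assms by (simp add: le_imp_T meet_le1)
  then have "T (meet h x) f"
    using assms T_trans le_imp_T by (meson meet_closed)
  moreover have "T (meet h x) x"
    using assms by (simp add: le_imp_T meet_le2)
  ultimately show ?thesis
    using assms by (simp add: T_meetI)
qed

lemma T_meet_meet_left:
  assumes "f \<in> A" "g \<in> A" "x \<in> A"
  shows "T (meet (meet f g) x) (meet f x)" and "T (meet (meet f g) x) (meet g x)"
  using assms by (simp_all add: T_meet_mono meet_le1 meet_le2)

lemma closed_filter_principal: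
  assumes "a \<in> A" shows "closed_filter {y \<in> A. T a y}"
proof (rule closed_filterI)
  fix x y assume "x \<in> {y \<in> A. T a y}" "y \<in> {y \<in> A. T a y}"
  then show "meet x y \<in> {y \<in> A. T a y}"
    using T_meetI[of a x y] assms by simp
next
  fix x y assume "x \<in> {y \<in> A. T a y}" "y \<in> A" "T x y"
  then show "y \<in> {y \<in> A. T a y}"
    using T_trans[of a x y] assms by simp
qed blast

lemma closed_filter_Union_chain:
  assumes "\<C> \<noteq> {}" "subset.chain (Collect closed_filter) \<C>"
  shows "closed_filter (\<Union>\<C>)"
proof -
  from assms(2) have closed: "\<And>G. G \<in> \<C> \<Longrightarrow> closed_filter G"
    and comparable: "\<And>G H. G \<in> \<C> \<Longrightarrow> H \<in> \<C> \<Longrightarrow> G \<subseteq> H \<or> H \<subseteq> G"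
    unfolding subset.chain_def by auto
  show ?thesis
  proof (rule closed_filterI)
    show "\<Union>\<C> \<subseteq> A"
      using closed_filter_subset[OF closed] by blast
  next
    fix x y assume "x \<in> \<Union>\<C>" "y \<in> \<Union>\<C>"
    then obtain G H where GH: "G \<in> \<C>" "H \<in> \<C>" "x \<in> G" "y \<in> H"
      by blast
    from comparable[OF GH(1,2)] show "meet x y \<in> \<Union>\<C>"
    proof
      assume "G \<subseteq> H"
      with GH show ?thesis
        using closed_filter_meet[OF closed[OF GH(2)]] by blast
    next
      assume "H \<subseteq> G"
      with GH show ?thesis
        using closed_filter_meet[OF closed[OF GH(1)]] by blast
    qed
  next
    fix x y assume "x \<in> \<Union>\<C>" "y \<in> A" "T x y"
    then obtain G where "G \<in> \<C>" "x \<in> G"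
      by blast
    with closed_filter_T[OF closed[OF \<open>G \<in> \<C>\<close>]] \<open>y \<in> A\<close> \<open>T x y\<close> show "y \<in> \<Union>\<C>"
      by blast
  qed
qed

lemma maximal_closed_filter_exists:
  assumes "closed_filter F" "b \<notin> F"
  shows "\<exists>M. F \<subseteq> M \<and> maximal_closed_filter b M"
proof -
  let ?\<F> = "{G. closed_filter G \<and> F \<subseteq> G \<and> b \<notin> G}"
  have "\<exists>M\<in>?\<F>. \<forall>G\<in>?\<F>. M \<subseteq> G \<longrightarrow> G = M"
  proof (rule subset_Zorn_nonempty)
    show "?\<F> \<noteq> {}"
      using assms by blast
  next
    fix \<C> assume "\<C> \<noteq> {}" and chain: "subset.chain ?\<F> \<C>"
    then have "subset.chain (Collect closed_filter) \<C>"
      unfolding subset.chain_def by blast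
    with \<open>\<C> \<noteq> {}\<close> have "closed_filter (\<Union>\<C>)"
      by (rule closed_filter_Union_chain)
    moreover have "F \<subseteq> \<Union>\<C>" "b \<notin> \<Union>\<C>"
      using chain \<open>\<C> \<noteq> {}\<close> unfolding subset.chain_def by blast+
    ultimately show "\<Union>\<C> \<in> ?\<F>"
      by blast
  qed
  then obtain M where M: "M \<in> ?\<F>" and max: "\<forall>G\<in>?\<F>. M \<subseteq> G \<longrightarrow> G = M" ..
  have "G = M" if "closed_filter G" "M \<subseteq> G" "b \<notin> G" for G
  proof -
    from M \<open>M \<subseteq> G\<close> have "F \<subseteq> G"
      by blast
    with max that show ?thesis
      by blast
  qed
  with M show ?thesis
    unfolding maximal_closed_filter_def by blast
qed

definition adjoin :: "'a set \<Rightarrow> 'a \<Rightarrow> 'a set" where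
  "adjoin F x = {z \<in> A. \<exists>f\<in>F. T (meet f x) z}"

lemma subset_adjoin:
  assumes "closed_filter F" "x \<in> A"
  shows "F \<subseteq> adjoin F x"
proof
  fix f assume "f \<in> F"
  with closed_filter_subset[OF assms(1)] have "f \<in> A"
    by blast
  with assms(2) have "T (meet f x) f"
    by (simp add: le_imp_T meet_le1)
  with \<open>f \<in> F\<close> \<open>f \<in> A\<close> show "f \<in> adjoin F x"
    unfolding adjoin_def by blast
qed

lemma mem_adjoin:
  assumes "closed_filter F" "F \<noteq> {}" "x \<in> A"
  shows "x \<in> adjoin F x"
proof -
  obtain f where "f \<in> F"
    using assms(2) by blast
  with closed_filter_subset[OF assms(1)] have "f \<in> A"
    by blast
  with assms(3) have "T (meet f x) x"
    by (simp add: le_imp_T meet_le2)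
  with \<open>f \<in> F\<close> assms(3) show ?thesis
    unfolding adjoin_def by blast
qed

lemma closed_filter_adjoin:
  assumes F: "closed_filter F" and x: "x \<in> A"
  shows "closed_filter (adjoin F x)"
proof (rule closed_filterI)
  show "adjoin F x \<subseteq> A"
    unfolding adjoin_def by blast
next
  fix u v assume "u \<in> adjoin F x" "v \<in> adjoin F x"
  then obtain f g where f: "f \<in> F" "u \<in> A" "T (meet f x) u" and g: "g \<in> F" "v \<in> A" "T (meet g x) v"
    unfolding adjoin_def by blast
  have fg: "f \<in> A" "g \<in> A" "meet f g \<in> F"
    using f g closed_filter_subset[OF F] closed_filter_meet[OF F] by auto
  have "T (meet (meet f g) x) u"
    using T_trans[OF _ _ _ T_meet_meet_left(1) f(3)] fg x f(2) by simp
  moreover have "T (meet (meet f g) x) v"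
    using T_trans[OF _ _ _ T_meet_meet_left(2) g(3)] fg x g(2) by simp
  ultimately have "T (meet (meet f g) x) (meet u v)"
    using fg x f(2) g(2) by (simp add: T_meetI)
  with fg(3) f(2) g(2) show "meet u v \<in> adjoin F x"
    unfolding adjoin_def by auto
next
  fix u y assume "u \<in> adjoin F x" "y \<in> A" "T u y"
  then obtain f where "f \<in> F" "u \<in> A" "T (meet f x) u"
    unfolding adjoin_def by blast
  moreover from this closed_filter_subset[OF F] x have "meet f x \<in> A"
    by auto
  ultimately show "y \<in> adjoin F x"
    unfolding adjoin_def using T_trans \<open>y \<in> A\<close> \<open>T u y\<close> by blast
qed

lemma maximal_closed_filter_outside:
  assumes max: "maximal_closed_filter b M" and "M \<noteq> {}" "x \<in> A" "x \<notin> M"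
  shows "\<exists>f\<in>M. T (meet f x) b"
proof (rule ccontr)
  assume "\<not> ?thesis"
  then have "b \<notin> adjoin M x"
    unfolding adjoin_def by blast
  moreover have "closed_filter M"
    using max unfolding maximal_closed_filter_def by blast
  ultimately have "adjoin M x = M"
    using max closed_filter_adjoin subset_adjoin \<open>x \<in> A\<close> unfolding maximal_closed_filter_def by blast
  with mem_adjoin[OF \<open>closed_filter M\<close> \<open>M \<noteq> {}\<close> \<open>x \<in> A\<close>] \<open>x \<notin> M\<close> show False
    by blast
qed

lemma maximal_closed_filter_prime:
  assumes max: "maximal_closed_filter b M" and "M \<noteq> {}" "b \<in> A"
    and xy: "x \<in> A" "y \<in> A" "join x y \<in> M"
  shows "x \<in> M \<or> y \<in> M"
proof (rule ccontr)
  assume "\<not> ?thesis"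
  then obtain f g where f: "f \<in> M" "T (meet f x) b" and g: "g \<in> M" "T (meet g y) b"
    using maximal_closed_filter_outside[OF max \<open>M \<noteq> {}\<close>] xy by meson
  have M: "closed_filter M" "b \<notin> M"
    using max unfolding maximal_closed_filter_def by auto
  then have fg: "f \<in> A" "g \<in> A" "meet f g \<in> M"
    using f g closed_filter_subset closed_filter_meet by auto
  have "T (meet (meet f g) x) b"
    using T_trans[OF _ _ _ T_meet_meet_left(1) f(2)] fg xy \<open>b \<in> A\<close> by simp
  moreover have "T (meet (meet f g) y) b"
    using T_trans[OF _ _ _ T_meet_meet_left(2) g(2)] fg xy \<open>b \<in> A\<close> by simp
  ultimately have "T (meet (meet f g) (join x y)) b"
    using fg xy \<open>b \<in> A\<close> by (simp add: T_joinI meet_join_distrib)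
  moreover have "meet (meet f g) (join x y) \<in> M"
    using closed_filter_meet[OF M(1) fg(3) xy(3)] .
  ultimately show False
    using closed_filter_T[OF M(1)] M(2) \<open>b \<in> A\<close> by blast
qed

theorem prime_filter_separation:
  assumes "a \<in> A" "b \<in> A" "\<not> T a b"
  shows "\<exists>Q\<in>X. (\<forall>x\<in>Q. \<forall>y\<in>A. T x y \<longrightarrow> y \<in> Q) \<and> a \<in> Q \<and> b \<notin> Q"
proof -
  obtain M where "{y \<in> A. T a y} \<subseteq> M" and max: "maximal_closed_filter b M"
    using maximal_closed_filter_exists[OF closed_filter_principal] assms by blast
  then have "a \<in> M"
    using assms T_refl by blast
  have M: "closed_filter M" "b \<notin> M"
    using max unfolding maximal_closed_filter_def by auto
  have "M \<in> X"
    unfolding prime_filters_def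
  proof (intro CollectI conjI ballI impI)
    show "M \<subseteq> A" "M \<noteq> {}" "M \<noteq> A"
      using closed_filter_subset[OF M(1)] M(2) \<open>a \<in> M\<close> \<open>b \<in> A\<close> by auto
    show "y \<in> M" if "x \<in> M" "y \<in> A" "x \<preceq> y" for x y
      using that closed_filter_subset[OF M(1)] closed_filter_T[OF M(1)] le_imp_T by blast
    show "meet x y \<in> M" if "x \<in> M" "y \<in> M" for x y
      using that closed_filter_meet[OF M(1)] by blast
    show "x \<in> M \<or> y \<in> M" if "x \<in> A" "y \<in> A" "join x y \<in> M" for x y
      using maximal_closed_filter_prime[OF max] that \<open>M \<noteq> {}\<close> \<open>b \<in> A\<close> by blast
  qed
  with M \<open>a \<in> M\<close> closed_filter_T show ?thesis
    by blast
qed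

end

context bdl
begin

definition lattice_congruence :: "('a \<times> 'a) set \<Rightarrow> bool" where
  "lattice_congruence \<theta> \<longleftrightarrow> equiv A \<theta> \<and>
     (\<forall>a b c d. (a, b) \<in> \<theta> \<longrightarrow> (c, d) \<in> \<theta> \<longrightarrow>
        (meet a c, meet b d) \<in> \<theta> \<and> (join a c, join b d) \<in> \<theta>)"

lemma
  assumes "lattice_congruence \<theta>"
  shows lattice_congruence_equiv: "equiv A \<theta>"
    and lattice_congruence_meet: "(a, b) \<in> \<theta> \<Longrightarrow> (c, d) \<in> \<theta> \<Longrightarrow> (meet a c, meet b d) \<in> \<theta>"
    and lattice_congruence_join: "(a, b) \<in> \<theta> \<Longrightarrow> (c, d) \<in> \<theta> \<Longrightarrow> (join a c, join b d) \<in> \<theta>"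
  using assms unfolding lattice_congruence_def by blast+

lemma lattice_quasiorder_congruence:
  assumes \<theta>: "lattice_congruence \<theta>"
  shows "lattice_quasiorder A meet join zero one (\<lambda>x y. (meet x y, x) \<in> \<theta>)"
proof -
  from lattice_congruence_equiv[OF \<theta>] have refl: "refl_on A \<theta>" and sym: "sym \<theta>" and trans: "trans \<theta>"
    by (auto elim: equivE)
  note cong = lattice_congruence_meet[OF \<theta>]
  show ?thesis
  proof (intro lattice_quasiorder.intro lattice_quasiorder_axioms.intro bdl_axioms)
    fix x y assume "x \<in> A" "y \<in> A" "x \<preceq> y"
    then show "(meet x y, x) \<in> \<theta>"
      by (simp add: bdl_le_def refl_onD[OF refl])
  next
    fix x y z assume xyz: "x \<in> A" "y \<in> A" "z \<in> A"
      and xy: "(meet x y, x) \<in> \<theta>" and yz: "(meet y z, y) \<in> \<theta>"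
    have "(meet (meet x y) z, meet x z) \<in> \<theta>"
      using cong[OF xy refl_onD[OF refl \<open>z \<in> A\<close>]] .
    then have "(meet x z, meet x (meet y z)) \<in> \<theta>"
      using symD[OF sym] meet_assoc[OF xyz] by simp
    moreover have "(meet x (meet y z), meet x y) \<in> \<theta>"
      using cong[OF refl_onD[OF refl \<open>x \<in> A\<close>] yz] .
    ultimately show "(meet x z, x) \<in> \<theta>"
      using transD[OF trans] xy by blast
  next
    fix x y z assume xyz: "x \<in> A" "y \<in> A" "z \<in> A"
      and xy: "(meet x y, x) \<in> \<theta>" and xz: "(meet x z, x) \<in> \<theta>"
    have "(meet (meet x y) z, meet x z) \<in> \<theta>"
      using cong[OF xy refl_onD[OF refl \<open>z \<in> A\<close>]] .
    then have "(meet x (meet y z), meet x z) \<in> \<theta>"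
      using meet_assoc[OF xyz] by simp
    with xz show "(meet x (meet y z), x) \<in> \<theta>"
      using transD[OF trans] by blast
  next
    fix x y z assume xyz: "x \<in> A" "y \<in> A" "z \<in> A"
      and xz: "(meet x z, x) \<in> \<theta>" and yz: "(meet y z, y) \<in> \<theta>"
    have "(join (meet x z) (meet y z), join x y) \<in> \<theta>"
      using lattice_congruence_join[OF \<theta> xz yz] .
    then show "(meet (join x y) z, join x y) \<in> \<theta>"
      using join_meet_distrib_right[OF xyz] by simp
  qed
qed

lemma congruence_separation:
  assumes \<theta>: "lattice_congruence \<theta>" and "a \<in> A" "b \<in> A" "(meet a b, a) \<notin> \<theta>"
  shows "\<exists>Q\<in>ThetaInv A meet join \<theta>. a \<in> Q \<and> b \<notin> Q"
proof -
  interpret T: lattice_quasiorder A meet join zero one "\<lambda>x y. (meet x y, x) \<in> \<theta>"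
    by (rule lattice_quasiorder_congruence[OF \<theta>])
  obtain Q where "Q \<in> X" and closed: "\<forall>x\<in>Q. \<forall>y\<in>A. (meet x y, x) \<in> \<theta> \<longrightarrow> y \<in> Q"
    and "a \<in> Q" "b \<notin> Q"
    using T.prime_filter_separation assms(2-4) by blast
  have "y \<in> Q" if xy: "(x, y) \<in> \<theta>" and "x \<in> Q" for x y
  proof -
    have equiv: "equiv A \<theta>"
      by (rule lattice_congruence_equiv[OF \<theta>])
    then have "x \<in> A" "y \<in> A"
      using equiv_type xy by blast+
    from equiv have refl: "refl_on A \<theta>" and sym: "sym \<theta>"
      by (auto elim: equivE)
    have "(meet x x, meet x y) \<in> \<theta>"
      using lattice_congruence_meet[OF \<theta> refl_onD[OF refl \<open>x \<in> A\<close>] xy] .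
    then have "(meet x y, x) \<in> \<theta>"
      using symD[OF sym] meet_idem[OF \<open>x \<in> A\<close>] by simp
    with closed \<open>x \<in> Q\<close> \<open>y \<in> A\<close> show ?thesis
      by blast
  qed
  with \<open>Q \<in> X\<close> have "Q \<in> ThetaInv A meet join \<theta>"
    unfolding ThetaInv_def by blast
  with \<open>a \<in> Q\<close> \<open>b \<notin> Q\<close> show ?thesis
    by blast
qed

lemma ThetaMap_iff:
  assumes "Y \<subseteq> X"
  shows "(a, b) \<in> ThetaMap A meet join Y \<longleftrightarrow> a \<in> A \<and> b \<in> A \<and> (\<forall>P\<in>Y. a \<in> P \<longleftrightarrow> b \<in> P)"
  using assms unfolding ThetaMap_def sigmaA_def by blast

lemma ThetaMap_antimono: "Y \<subseteq> Z \<Longrightarrow> ThetaMap A meet join Z \<subseteq> ThetaMap A meet join Y"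
  unfolding ThetaMap_def by blast

lemma ThetaInv_antimono: "\<theta> \<subseteq> \<eta> \<Longrightarrow> ThetaInv A meet join \<eta> \<subseteq> ThetaInv A meet join \<theta>"
  unfolding ThetaInv_def by blast

lemma lattice_congruence_ThetaMap:
  assumes Y: "Y \<subseteq> X"
  shows "lattice_congruence (ThetaMap A meet join Y)"
  unfolding lattice_congruence_def
proof (intro conjI allI impI)
  show "equiv A (ThetaMap A meet join Y)"
  proof (rule equivI)
    show "ThetaMap A meet join Y \<subseteq> A \<times> A"
      unfolding ThetaMap_def by blast
    show "refl_on A (ThetaMap A meet join Y)"
      by (rule refl_onI) (simp add: ThetaMap_def)
    show "sym (ThetaMap A meet join Y)"
      by (rule symI) (auto simp: ThetaMap_def)
    show "trans (ThetaMap A meet join Y)"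
      by (rule transI) (auto simp: ThetaMap_def)
  qed
next
  fix a b c d
  assume ab: "(a, b) \<in> ThetaMap A meet join Y" and cd: "(c, d) \<in> ThetaMap A meet join Y"
  then have A: "a \<in> A" "b \<in> A" "c \<in> A" "d \<in> A"
    by (auto simp: ThetaMap_iff[OF Y])
  have agree: "a \<in> P \<longleftrightarrow> b \<in> P" "c \<in> P \<longleftrightarrow> d \<in> P" if "P \<in> Y" for P
    using ab cd that by (auto simp: ThetaMap_iff[OF Y])
  show "(meet a c, meet b d) \<in> ThetaMap A meet join Y"
    unfolding ThetaMap_iff[OF Y]
  proof (intro conjI ballI)
    fix P assume "P \<in> Y"
    with Y have "P \<in> X"
      by blast
    with A agree[OF \<open>P \<in> Y\<close>] show "meet a c \<in> P \<longleftrightarrow> meet b d \<in> P"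
      by (simp add: prime_filter_meet_iff)
  qed (use A in simp_all)
  show "(join a c, join b d) \<in> ThetaMap A meet join Y"
    unfolding ThetaMap_iff[OF Y]
  proof (intro conjI ballI)
    fix P assume "P \<in> Y"
    with Y have "P \<in> X"
      by blast
    with A agree[OF \<open>P \<in> Y\<close>] show "join a c \<in> P \<longleftrightarrow> join b d \<in> P"
      by (simp add: prime_filter_join_iff)
  qed (use A in simp_all)
qed

lemma ThetaMap_ThetaInv_meet:
  assumes \<theta>: "lattice_congruence \<theta>"
    and xy: "(x, y) \<in> ThetaMap A meet join (ThetaInv A meet join \<theta>)"
  shows "(meet x y, x) \<in> \<theta>"
proof (rule ccontr)
  have TI: "ThetaInv A meet join \<theta> \<subseteq> X"
    unfolding ThetaInv_def by blast
  assume "(meet x y, x) \<notin> \<theta>"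
  moreover have "x \<in> A" "y \<in> A"
    using xy by (auto simp: ThetaMap_iff[OF TI])
  ultimately obtain Q where "Q \<in> ThetaInv A meet join \<theta>" "x \<in> Q" "y \<notin> Q"
    using congruence_separation[OF \<theta>] by blast
  with xy show False
    by (auto simp: ThetaMap_iff[OF TI])
qed

lemma ThetaMap_ThetaInv:
  assumes \<theta>: "lattice_congruence \<theta>"
  shows "ThetaMap A meet join (ThetaInv A meet join \<theta>) = \<theta>"
proof
  have equiv: "equiv A \<theta>"
    by (rule lattice_congruence_equiv[OF \<theta>])
  then have sym: "sym \<theta>" and trans: "trans \<theta>"
    by (auto elim: equivE)
  have TI: "ThetaInv A meet join \<theta> \<subseteq> X"
    unfolding ThetaInv_def by blast
  show "ThetaMap A meet join (ThetaInv A meet join \<theta>) \<subseteq> \<theta>"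
  proof (clarify)
    fix a b assume ab: "(a, b) \<in> ThetaMap A meet join (ThetaInv A meet join \<theta>)"
    then have "(b, a) \<in> ThetaMap A meet join (ThetaInv A meet join \<theta>)" "a \<in> A" "b \<in> A"
      by (auto simp: ThetaMap_iff[OF TI])
    then have "(meet a b, b) \<in> \<theta>"
      using ThetaMap_ThetaInv_meet[OF \<theta>, of b a] meet_commute[of a b] by simp
    moreover have "(a, meet a b) \<in> \<theta>"
      using symD[OF sym ThetaMap_ThetaInv_meet[OF \<theta> ab]] .
    ultimately show "(a, b) \<in> \<theta>"
      using transD[OF trans] by blast
  qed
  show "\<theta> \<subseteq> ThetaMap A meet join (ThetaInv A meet join \<theta>)"
  proof (clarify)
    fix a b assume "(a, b) \<in> \<theta>"
    moreover from this have "(b, a) \<in> \<theta>" "a \<in> A" "b \<in> A"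
      using symD[OF sym] equiv_type[OF equiv] by blast+
    ultimately show "(a, b) \<in> ThetaMap A meet join (ThetaInv A meet join \<theta>)"
      unfolding ThetaMap_iff[OF TI] unfolding ThetaInv_def by blast
  qed
qed

abbreviation \<sigma> :: "'a \<Rightarrow> 'a set set" where "\<sigma> a \<equiv> sigmaA A meet join a"

lemma sigmaA_subset: "\<sigma> a \<subseteq> X"
  unfolding sigmaA_def by blast

lemma sigmaA_meet: "a \<in> A \<Longrightarrow> b \<in> A \<Longrightarrow> \<sigma> (meet a b) = \<sigma> a \<inter> \<sigma> b"
  unfolding sigmaA_def using prime_filter_meet_iff by blast

lemma sigmaA_join: "a \<in> A \<Longrightarrow> b \<in> A \<Longrightarrow> \<sigma> (join a b) = \<sigma> a \<union> \<sigma> b"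
  unfolding sigmaA_def using prime_filter_join_iff by blast

lemma sigmaA_one: "\<sigma> one = X"
  unfolding sigmaA_def using one_in_prime_filter by blast

lemma sigmaA_zero: "\<sigma> zero = {}"
  unfolding sigmaA_def using zero_notin_prime_filter by blast

definition tau_subbase :: "'a set set set" where
  "tau_subbase = \<sigma> ` A \<union> (\<lambda>a. X - \<sigma> a) ` A"

lemma Union_tau_subbase: "\<Union>tau_subbase = X"
proof
  show "\<Union>tau_subbase \<subseteq> X"
    unfolding tau_subbase_def using sigmaA_subset by blast
  have "X - \<sigma> zero \<in> tau_subbase"
    unfolding tau_subbase_def by simp
  then show "X \<subseteq> \<Union>tau_subbase"
    using sigmaA_zero by auto
qed

lemma tauA_eq: "tauA A meet join = topology_generated_by tau_subbase"
  unfolding tauA_def tau_subbase_def[symmetric]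
  by (metis Union_tau_subbase subtopology_topspace topology_generated_by_topspace)

lemma topspace_tauA: "topspace (tauA A meet join) = X"
  by (simp add: tauA_eq Union_tau_subbase)

lemma openin_tauA_diff:
  assumes "a \<in> A" "b \<in> A"
  shows "openin (tauA A meet join) (\<sigma> a - \<sigma> b)"
proof -
  have "\<sigma> a - \<sigma> b = \<sigma> a \<inter> (X - \<sigma> b)"
    using sigmaA_subset by blast
  moreover have "\<sigma> a \<in> tau_subbase" "X - \<sigma> b \<in> tau_subbase"
    unfolding tau_subbase_def using assms by blast+
  ultimately show ?thesis
    unfolding tauA_eq by (simp add: openin_Int topology_generated_by_Basis)
qed

lemma openin_tauA_base:
  assumes "openin (tauA A meet join) U" "P \<in> U"
  shows "\<exists>a\<in>A. \<exists>b\<in>A. P \<in> \<sigma> a - \<sigma> b \<and> \<sigma> a - \<sigma> b \<subseteq> U"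
proof -
  have "generate_topology_on tau_subbase U"
    using assms(1) unfolding tauA_eq openin_topology_generated_by_iff .
  then show ?thesis
    using assms(2)
  proof (induction arbitrary: P)
    case Empty
    then show ?case by simp
  next
    case (Int U V)
    then obtain a b a' b' where "a \<in> A" "b \<in> A" "P \<in> \<sigma> a - \<sigma> b" "\<sigma> a - \<sigma> b \<subseteq> U"
      and "a' \<in> A" "b' \<in> A" "P \<in> \<sigma> a' - \<sigma> b'" "\<sigma> a' - \<sigma> b' \<subseteq> V"
      by (meson IntD1 IntD2)
    then show ?case
      by (intro bexI[of _ "meet a a'"] bexI[of _ "join b b'"]) (auto simp: sigmaA_meet sigmaA_join)
  next
    case (UN K)
    then show ?case by blast
  next
    case (Basis S)
    then consider c where "c \<in> A" "S = \<sigma> c" | c where "c \<in> A" "S = X - \<sigma> c"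
      unfolding tau_subbase_def by blast
    then show ?case
    proof cases
      case 1
      with Basis.prems show ?thesis
        by (intro bexI[of _ c] bexI[of _ zero]) (auto simp: sigmaA_zero)
    next
      case 2
      with Basis.prems show ?thesis
        by (intro bexI[of _ one] bexI[of _ c]) (auto simp: sigmaA_one)
    qed
  qed
qed

lemma closedin_ThetaInv:
  assumes "\<theta> \<subseteq> A \<times> A"
  shows "closedin (tauA A meet join) (ThetaInv A meet join \<theta>)"
proof -
  have "X - ThetaInv A meet join \<theta> = (\<Union>(a, b)\<in>\<theta>. \<sigma> a - \<sigma> b)"
    unfolding ThetaInv_def sigmaA_def by auto
  moreover have "openin (tauA A meet join) (\<Union>(a, b)\<in>\<theta>. \<sigma> a - \<sigma> b)"
    using assms openin_tauA_diff by (intro openin_Union) auto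
  ultimately show ?thesis
    unfolding closedin_def topspace_tauA ThetaInv_def by auto
qed

lemma ThetaInv_ThetaMap:
  assumes Y: "closedin (tauA A meet join) Y"
  shows "ThetaInv A meet join (ThetaMap A meet join Y) = Y"
proof
  have YX: "Y \<subseteq> X"
    using closedin_subset[OF Y] by (simp add: topspace_tauA)
  then show "Y \<subseteq> ThetaInv A meet join (ThetaMap A meet join Y)"
    unfolding ThetaInv_def by (auto simp: ThetaMap_iff)
  show "ThetaInv A meet join (ThetaMap A meet join Y) \<subseteq> Y"
  proof
    fix P assume P: "P \<in> ThetaInv A meet join (ThetaMap A meet join Y)"
    then have "P \<in> X"
      unfolding ThetaInv_def by blast
    show "P \<in> Y"
    proof (rule ccontr)
      assume "P \<notin> Y"
      have "openin (tauA A meet join) (X - Y)"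
        using Y unfolding closedin_def topspace_tauA by blast
      then obtain a b where ab: "a \<in> A" "b \<in> A" "P \<in> \<sigma> a - \<sigma> b" "\<sigma> a - \<sigma> b \<subseteq> X - Y"
        using openin_tauA_base \<open>P \<in> X\<close> \<open>P \<notin> Y\<close> by blast
      then have "\<sigma> a \<inter> Y = \<sigma> (meet a b) \<inter> Y"
        by (auto simp: sigmaA_meet)
      with ab(1,2) have "(a, meet a b) \<in> ThetaMap A meet join Y"
        unfolding ThetaMap_def by simp
      with P ab(3) have "meet a b \<in> P"
        unfolding ThetaInv_def sigmaA_def by blast
      with \<open>P \<in> X\<close> ab show False
        by (simp add: prime_filter_meet_iff sigmaA_def)
    qed
  qed
qed

end

locale wh_algebra = bdl +
  fixes imp :: "'a \<Rightarrow> 'a \<Rightarrow> 'a"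
  assumes imp_closed: "x \<in> A \<Longrightarrow> y \<in> A \<Longrightarrow> imp x y \<in> A"
    and imp_self: "x \<in> A \<Longrightarrow> imp x x = one"
    and imp_meet: "x \<in> A \<Longrightarrow> y \<in> A \<Longrightarrow> z \<in> A \<Longrightarrow> imp x (meet y z) = meet (imp x y) (imp x z)"
    and imp_join: "x \<in> A \<Longrightarrow> y \<in> A \<Longrightarrow> z \<in> A \<Longrightarrow> imp (join x y) z = meet (imp x z) (imp y z)"
    and imp_trans: "x \<in> A \<Longrightarrow> y \<in> A \<Longrightarrow> z \<in> A \<Longrightarrow> meet (imp x y) (imp y z) \<preceq> imp x z"
begin

lemma imp_eq_one_if_le:
  assumes "x \<in> A" "y \<in> A" "x \<preceq> y"
  shows "imp x y = one"
proof -
  have "one = imp (join x y) y"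
    using assms by (simp add: le_iff_join imp_self)
  also have "\<dots> = meet (imp x y) one"
    using assms by (simp add: imp_join imp_self)
  also have "\<dots> = imp x y"
    using le_one[OF imp_closed[OF assms(1,2)]] by (simp add: bdl_le_def)
  finally show ?thesis
    by simp
qed

lemma relR_successor:
  assumes P: "P \<in> X" and "a \<in> A" "b \<in> A" "imp a b \<notin> P"
  shows "\<exists>Q. (P, Q) \<in> relR A meet join imp \<and> a \<in> Q \<and> b \<notin> Q"
proof -
  interpret T: lattice_quasiorder A meet join zero one "\<lambda>x y. imp x y \<in> P"
  proof (intro lattice_quasiorder.intro lattice_quasiorder_axioms.intro bdl_axioms)
    fix x y assume "x \<in> A" "y \<in> A" "x \<preceq> y"
    then show "imp x y \<in> P"
      by (simp add: imp_eq_one_if_le one_in_prime_filter[OF P])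
  next
    fix x y z assume xyz: "x \<in> A" "y \<in> A" "z \<in> A" and "imp x y \<in> P" "imp y z \<in> P"
    then have "meet (imp x y) (imp y z) \<in> P"
      by (simp add: prime_filter_meet[OF P])
    with xyz show "imp x z \<in> P"
      using prime_filter_upward[OF P _ imp_closed imp_trans] by blast
  next
    fix x y z assume "x \<in> A" "y \<in> A" "z \<in> A" "imp x y \<in> P" "imp x z \<in> P"
    then show "imp x (meet y z) \<in> P"
      by (simp add: imp_meet prime_filter_meet[OF P])
  next
    fix x y z assume "x \<in> A" "y \<in> A" "z \<in> A" "imp x z \<in> P" "imp y z \<in> P"
    then show "imp (join x y) z \<in> P"
      by (simp add: imp_join prime_filter_meet[OF P])
  qed
  obtain Q where "Q \<in> X" "\<forall>x\<in>Q. \<forall>y\<in>A. imp x y \<in> P \<longrightarrow> y \<in> Q" "a \<in> Q" "b \<notin> Q"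
    using T.prime_filter_separation assms(2-4) by blast
  with P show ?thesis
    unfolding relR_def by blast
qed

lemma ThetaMap_imp:
  assumes Y: "Y \<subseteq> X" "relR A meet join imp `` Y \<subseteq> Y"
    and "(a, b) \<in> ThetaMap A meet join Y" "(c, d) \<in> ThetaMap A meet join Y"
  shows "(imp a c, imp b d) \<in> ThetaMap A meet join Y"
proof -
  have preserve: "imp b d \<in> P"
    if ab: "(a, b) \<in> ThetaMap A meet join Y" and cd: "(c, d) \<in> ThetaMap A meet join Y"
      and "P \<in> Y" "imp a c \<in> P" for a b c d P
  proof (rule ccontr)
    assume "imp b d \<notin> P"
    moreover have A: "a \<in> A" "b \<in> A" "c \<in> A" "d \<in> A"
      using ab cd by (auto simp: ThetaMap_iff[OF Y(1)])
    ultimately obtain Q where Q: "(P, Q) \<in> relR A meet join imp" "b \<in> Q" "d \<notin> Q"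
      using relR_successor \<open>P \<in> Y\<close> Y(1) by blast
    with Y(2) \<open>P \<in> Y\<close> have "Q \<in> Y"
      by blast
    with ab Q(2) have "a \<in> Q"
      by (auto simp: ThetaMap_iff[OF Y(1)])
    with Q(1) \<open>imp a c \<in> P\<close> A have "c \<in> Q"
      unfolding relR_def by blast
    with cd \<open>Q \<in> Y\<close> Q(3) show False
      by (auto simp: ThetaMap_iff[OF Y(1)])
  qed
  have ba: "(b, a) \<in> ThetaMap A meet join Y" and dc: "(d, c) \<in> ThetaMap A meet join Y"
    using assms(3,4) by (auto simp: ThetaMap_iff[OF Y(1)])
  then have "a \<in> A" "b \<in> A" "c \<in> A" "d \<in> A"
    by (auto simp: ThetaMap_iff[OF Y(1)])
  then show ?thesis
    unfolding ThetaMap_iff[OF Y(1)]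
    using preserve[OF assms(3,4)] preserve[OF ba dc] by (auto simp: imp_closed)
qed

lemma relR_ThetaInv:
  assumes "equiv A \<theta>" and imp_cong: "\<And>a b c d. (a, b) \<in> \<theta> \<Longrightarrow> (c, d) \<in> \<theta> \<Longrightarrow> (imp a c, imp b d) \<in> \<theta>"
  shows "relR A meet join imp `` ThetaInv A meet join \<theta> \<subseteq> ThetaInv A meet join \<theta>"
proof
  fix Q assume "Q \<in> relR A meet join imp `` ThetaInv A meet join \<theta>"
  then obtain P where P: "P \<in> ThetaInv A meet join \<theta>" and PQ: "(P, Q) \<in> relR A meet join imp"
    by blast
  have "b \<in> Q" if ab: "(a, b) \<in> \<theta>" and "a \<in> Q" for a b
  proof -
    have A: "a \<in> A" "b \<in> A"
      using equiv_type[OF assms(1)] ab by blast+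
    from assms(1) have refl: "refl_on A \<theta>" and sym: "sym \<theta>"
      by (auto elim: equivE)
    have "(imp a b, imp b b) \<in> \<theta>"
      using imp_cong[OF ab refl_onD[OF refl A(2)]] .
    then have "(one, imp a b) \<in> \<theta>"
      using symD[OF sym] imp_self[OF A(2)] by simp
    with P have "imp a b \<in> P"
      unfolding ThetaInv_def using one_in_prime_filter by blast
    with PQ A \<open>a \<in> Q\<close> show "b \<in> Q"
      unfolding relR_def by blast
  qed
  with PQ show "Q \<in> ThetaInv A meet join \<theta>"
    unfolding ThetaInv_def relR_def by blast
qed

end

locale wb_algebra = bdl +
  fixes coimp :: "'a \<Rightarrow> 'a \<Rightarrow> 'a"
  assumes coimp_closed: "x \<in> A \<Longrightarrow> y \<in> A \<Longrightarrow> coimp x y \<in> A"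
    and coimp_self: "x \<in> A \<Longrightarrow> coimp x x = zero"
    and coimp_join: "x \<in> A \<Longrightarrow> y \<in> A \<Longrightarrow> z \<in> A \<Longrightarrow> coimp (join x y) z = join (coimp x z) (coimp y z)"
    and coimp_meet: "x \<in> A \<Longrightarrow> y \<in> A \<Longrightarrow> z \<in> A \<Longrightarrow> coimp x (meet y z) = join (coimp x y) (coimp x z)"
    and coimp_trans: "x \<in> A \<Longrightarrow> y \<in> A \<Longrightarrow> z \<in> A \<Longrightarrow> coimp x z \<preceq> join (coimp x y) (coimp y z)"
begin

lemma coimp_eq_zero_if_le:
  assumes "x \<in> A" "y \<in> A" "x \<preceq> y"
  shows "coimp x y = zero"
proof -
  have "zero = coimp (join x y) y"
    using assms by (simp add: le_iff_join coimp_self)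
  also have "\<dots> = join (coimp x y) zero"
    using assms by (simp add: coimp_join coimp_self)
  also have "\<dots> = coimp x y"
    using join_zero[OF coimp_closed[OF assms(1,2)]] .
  finally show ?thesis
    by simp
qed

lemma relS_successor:
  assumes P: "P \<in> X" and "a \<in> A" "b \<in> A" "coimp a b \<in> P"
  shows "\<exists>Q. (P, Q) \<in> relS A meet join coimp \<and> a \<in> Q \<and> b \<notin> Q"
proof -
  interpret T: lattice_quasiorder A meet join zero one "\<lambda>x y. coimp x y \<notin> P"
  proof (intro lattice_quasiorder.intro lattice_quasiorder_axioms.intro bdl_axioms)
    fix x y assume "x \<in> A" "y \<in> A" "x \<preceq> y"
    then show "coimp x y \<notin> P"
      by (simp add: coimp_eq_zero_if_le zero_notin_prime_filter[OF P])
  next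
    fix x y z assume xyz: "x \<in> A" "y \<in> A" "z \<in> A" and "coimp x y \<notin> P" "coimp y z \<notin> P"
    then have "join (coimp x y) (coimp y z) \<notin> P"
      by (simp add: prime_filter_join_iff[OF P] coimp_closed)
    with xyz show "coimp x z \<notin> P"
      using prime_filter_upward[OF P _ _ coimp_trans[OF xyz]] by (auto simp: coimp_closed)
  next
    fix x y z assume "x \<in> A" "y \<in> A" "z \<in> A" "coimp x y \<notin> P" "coimp x z \<notin> P"
    then show "coimp x (meet y z) \<notin> P"
      by (simp add: coimp_meet prime_filter_join_iff[OF P] coimp_closed)
  next
    fix x y z assume "x \<in> A" "y \<in> A" "z \<in> A" "coimp x z \<notin> P" "coimp y z \<notin> P"
    then show "coimp (join x y) z \<notin> P"
      by (simp add: coimp_join prime_filter_join_iff[OF P] coimp_closed)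
  qed
  obtain Q where "Q \<in> X" "\<forall>x\<in>Q. \<forall>y\<in>A. coimp x y \<notin> P \<longrightarrow> y \<in> Q" "a \<in> Q" "b \<notin> Q"
    using T.prime_filter_separation assms(2-4) by blast
  with P show ?thesis
    unfolding relS_def by blast
qed

lemma ThetaMap_coimp:
  assumes Y: "Y \<subseteq> X" "relS A meet join coimp `` Y \<subseteq> Y"
    and "(a, b) \<in> ThetaMap A meet join Y" "(c, d) \<in> ThetaMap A meet join Y"
  shows "(coimp a c, coimp b d) \<in> ThetaMap A meet join Y"
proof -
  have preserve: "coimp b d \<in> P"
    if ab: "(a, b) \<in> ThetaMap A meet join Y" and cd: "(c, d) \<in> ThetaMap A meet join Y"
      and "P \<in> Y" "coimp a c \<in> P" for a b c d P
  proof -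
    have A: "a \<in> A" "b \<in> A" "c \<in> A" "d \<in> A"
      using ab cd by (auto simp: ThetaMap_iff[OF Y(1)])
    then obtain Q where Q: "(P, Q) \<in> relS A meet join coimp" "a \<in> Q" "c \<notin> Q"
      using relS_successor \<open>P \<in> Y\<close> \<open>coimp a c \<in> P\<close> Y(1) by blast
    with Y(2) \<open>P \<in> Y\<close> have "Q \<in> Y"
      by blast
    with ab cd Q(2,3) have "b \<in> Q" "d \<notin> Q"
      by (auto simp: ThetaMap_iff[OF Y(1)])
    with Q(1) A show ?thesis
      unfolding relS_def by blast
  qed
  have ba: "(b, a) \<in> ThetaMap A meet join Y" and dc: "(d, c) \<in> ThetaMap A meet join Y"
    using assms(3,4) by (auto simp: ThetaMap_iff[OF Y(1)])
  then have "a \<in> A" "b \<in> A" "c \<in> A" "d \<in> A"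
    by (auto simp: ThetaMap_iff[OF Y(1)])
  then show ?thesis
    unfolding ThetaMap_iff[OF Y(1)]
    using preserve[OF assms(3,4)] preserve[OF ba dc] by (auto simp: coimp_closed)
qed

lemma relS_ThetaInv:
  assumes "equiv A \<theta>" and coimp_cong: "\<And>a b c d. (a, b) \<in> \<theta> \<Longrightarrow> (c, d) \<in> \<theta> \<Longrightarrow> (coimp a c, coimp b d) \<in> \<theta>"
  shows "relS A meet join coimp `` ThetaInv A meet join \<theta> \<subseteq> ThetaInv A meet join \<theta>"
proof
  fix Q assume "Q \<in> relS A meet join coimp `` ThetaInv A meet join \<theta>"
  then obtain P where P: "P \<in> ThetaInv A meet join \<theta>" and PQ: "(P, Q) \<in> relS A meet join coimp"
    by blast
  have "b \<in> Q" if ab: "(a, b) \<in> \<theta>" and "a \<in> Q" for a b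
  proof (rule ccontr)
    assume "b \<notin> Q"
    have A: "a \<in> A" "b \<in> A"
      using equiv_type[OF assms(1)] ab by blast+
    with PQ \<open>a \<in> Q\<close> \<open>b \<notin> Q\<close> have "coimp a b \<in> P"
      unfolding relS_def by blast
    from assms(1) have refl: "refl_on A \<theta>"
      by (auto elim: equivE)
    have "(coimp a b, zero) \<in> \<theta>"
      using coimp_cong[OF ab refl_onD[OF refl A(2)]] coimp_self[OF A(2)] by simp
    with P \<open>coimp a b \<in> P\<close> have "zero \<in> P"
      unfolding ThetaInv_def by blast
    with P show False
      unfolding ThetaInv_def using zero_notin_prime_filter by blast
  qed
  with PQ show "Q \<in> ThetaInv A meet join \<theta>"
    unfolding ThetaInv_def relS_def by blast
qed

end

locale wh_wb_algebra = wh_algebra A meet join zero one imp + wb_algebra A meet join zero one coimp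
  for A meet join zero one imp coimp
begin

lemma DC_iff:
  "Y \<in> DC A meet join imp coimp \<longleftrightarrow> closedin (tauA A meet join) Y \<and>
     relR A meet join imp `` Y \<subseteq> Y \<and> relS A meet join coimp `` Y \<subseteq> Y"
  unfolding DC_def by blast

lemma
  assumes "\<theta> \<in> Con A meet join imp coimp"
  shows Con_equiv: "equiv A \<theta>"
    and Con_lattice_congruence: "lattice_congruence \<theta>"
    and Con_imp: "(a, b) \<in> \<theta> \<Longrightarrow> (c, d) \<in> \<theta> \<Longrightarrow> (imp a c, imp b d) \<in> \<theta>"
    and Con_coimp: "(a, b) \<in> \<theta> \<Longrightarrow> (c, d) \<in> \<theta> \<Longrightarrow> (coimp a c, coimp b d) \<in> \<theta>"
  using assms unfolding Con_def lattice_congruence_def by blast+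

lemma ThetaMap_in_Con:
  assumes "Y \<in> DC A meet join imp coimp"
  shows "ThetaMap A meet join Y \<in> Con A meet join imp coimp"
proof -
  from assms have closed: "closedin (tauA A meet join) Y"
    and R: "relR A meet join imp `` Y \<subseteq> Y" and S: "relS A meet join coimp `` Y \<subseteq> Y"
    by (simp_all add: DC_iff)
  have Y: "Y \<subseteq> X"
    using closedin_subset[OF closed] by (simp add: topspace_tauA)
  note cong = lattice_congruence_ThetaMap[OF Y]
  show ?thesis
    unfolding Con_def
  proof (intro CollectI conjI allI impI; (elim conjE)?)
    show "equiv A (ThetaMap A meet join Y)"
      by (rule lattice_congruence_equiv[OF cong])
    fix a b c d
    assume "(a, b) \<in> ThetaMap A meet join Y" "(c, d) \<in> ThetaMap A meet join Y"
    then show "(meet a c, meet b d) \<in> ThetaMap A meet join Y"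
      and "(join a c, join b d) \<in> ThetaMap A meet join Y"
      and "(imp a c, imp b d) \<in> ThetaMap A meet join Y"
      and "(coimp a c, coimp b d) \<in> ThetaMap A meet join Y"
      by (rule lattice_congruence_meet[OF cong], rule lattice_congruence_join[OF cong],
          rule ThetaMap_imp[OF Y R], rule ThetaMap_coimp[OF Y S])
  qed
qed

lemma ThetaInv_in_DC:
  assumes "\<theta> \<in> Con A meet join imp coimp"
  shows "ThetaInv A meet join \<theta> \<in> DC A meet join imp coimp"
  unfolding DC_iff
proof (intro conjI)
  show "closedin (tauA A meet join) (ThetaInv A meet join \<theta>)"
    by (rule closedin_ThetaInv[OF equiv_type[OF Con_equiv[OF assms]]])
  show "relR A meet join imp `` ThetaInv A meet join \<theta> \<subseteq> ThetaInv A meet join \<theta>"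
    by (rule relR_ThetaInv[OF Con_equiv[OF assms] Con_imp[OF assms]])
  show "relS A meet join coimp `` ThetaInv A meet join \<theta> \<subseteq> ThetaInv A meet join \<theta>"
    by (rule relS_ThetaInv[OF Con_equiv[OF assms] Con_coimp[OF assms]])
qed

lemma DC_subset_iff:
  assumes "Y \<in> DC A meet join imp coimp" "Z \<in> DC A meet join imp coimp"
  shows "Y \<subseteq> Z \<longleftrightarrow> ThetaMap A meet join Z \<subseteq> ThetaMap A meet join Y"
proof
  assume "ThetaMap A meet join Z \<subseteq> ThetaMap A meet join Y"
  then have "ThetaInv A meet join (ThetaMap A meet join Y) \<subseteq> ThetaInv A meet join (ThetaMap A meet join Z)"
    by (rule ThetaInv_antimono)
  with assms show "Y \<subseteq> Z"
    by (simp add: DC_iff ThetaInv_ThetaMap)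
qed (rule ThetaMap_antimono)

end

lemma wh_wb_algebra_if_whb_algebra:
  assumes "whb_algebra A meet join imp coimp zero one"
  shows "wh_wb_algebra A meet join zero one imp coimp"
  using assms unfolding whb_algebra_def
  by (intro wh_wb_algebra.intro wh_algebra.intro wb_algebra.intro bdl.intro
      wh_algebra_axioms.intro wb_algebra_axioms.intro) simp_all

theorem theorem5p10:
  assumes "whb_algebra A meet join imp coimp zero one"
  shows "bij_betw (ThetaMap A meet join) (DC A meet join imp coimp) (Con A meet join imp coimp)
    \<and> (\<forall>\<theta>\<in>Con A meet join imp coimp.
          ThetaInv A meet join \<theta> \<in> DC A meet join imp coimp
        \<and> ThetaMap A meet join (ThetaInv A meet join \<theta>) = \<theta>)
    \<and> (\<forall>Y\<in>DC A meet join imp coimp. ThetaInv A meet join (ThetaMap A meet join Y) = Y)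
    \<and> (\<forall>Y\<in>DC A meet join imp coimp. \<forall>Z\<in>DC A meet join imp coimp.
          Y \<subseteq> Z \<longleftrightarrow> ThetaMap A meet join Z \<subseteq> ThetaMap A meet join Y)"
proof -
  interpret wh_wb_algebra A meet join zero one imp coimp
    by (rule wh_wb_algebra_if_whb_algebra[OF assms])
  have Con_inverse: "\<forall>\<theta>\<in>Con A meet join imp coimp. ThetaMap A meet join (ThetaInv A meet join \<theta>) = \<theta>"
    by (simp add: ThetaMap_ThetaInv Con_lattice_congruence)
  have DC_inverse: "\<forall>Y\<in>DC A meet join imp coimp. ThetaInv A meet join (ThetaMap A meet join Y) = Y"
    by (simp add: ThetaInv_ThetaMap DC_iff)
  have "bij_betw (ThetaMap A meet join) (DC A meet join imp coimp) (Con A meet join imp coimp)"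
  proof (rule bij_betw_byWitness[OF DC_inverse Con_inverse])
    show "ThetaMap A meet join ` DC A meet join imp coimp \<subseteq> Con A meet join imp coimp"
      using ThetaMap_in_Con by blast
    show "ThetaInv A meet join ` Con A meet join imp coimp \<subseteq> DC A meet join imp coimp"
      using ThetaInv_in_DC by blast
  qed
  with Con_inverse DC_inverse show ?thesis
    by (simp add: ThetaInv_in_DC DC_subset_iff)
qed

end
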